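(* Fix $n\ge2$, $1\le m\le n-1$ and $\sigma\ge0$. Let $u_m(\cdot;\sigma)$ be the eigenfunction for $\lambda_m(\sigma)$ normalized so that $u_m(x;\sigma)=\sin(\gamma_m(\sigma)x)$ for $x\in I_1$. Then for every $1\le k\le n-1$, $$u_m(x_k;\sigma)=\frac{\sin\left(\frac{\gamma_m(\sigma)}{n}\right)}{\sin\left(\frac{m\pi}{n}\right)}\,\sin\left(\tfrac{km\pi}{n}\right)=\frac{\sin\left(\frac{\gamma_m(\sigma)}{n}\right)}{\sin\left(\frac{m\pi}{n}\right)}\,u_m(x_k;0),$$ where $u_m(x;0)=\sin(m\pi x)$.
   Context: Fix an integer $n\ge2$. Set $x_k=k/n$ for $0\le k\le n$ and $I_k=[x_{k-1},x_k]$ for $1\le k\le n$. For $\sigma\ge 0$, the spectral flow problem is the eigenvalue problem of finding $\lambda\in\mathbb{R}$ and a nonzero continuous function $u:[0,1]\to\mathbb{R}$, smooth on each open interval $(x_{k-1},x_k)$, such that $-u''=\lambda u$ on each $(x_{k-1},x_k)$, $u(0)=u(1)=0$, and for each $1\le k\le n-1$: $u$ is continuous at $x_k$ and $u'(x_k^+)-u'(x_k^-)=\sigma\,u(x_k)$, where $\pm$ denote right/left one-sided limits. For each $\sigma\ge0$ the eigenvalues are real, positive and simple, and are listed increasingly as $\lambda_1(\sigma)<\lambda_2(\sigma)<\cdots$; at $\sigma=0$, $\lambda_m(0)=m^2\pi^2$ with eigenfunction $\sin(m\pi x)$. We write $\gamma_m(\sigma)=\sqrt{\lambda_m(\sigma)}\ge0$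 and $u_m(x;\sigma)$ for an eigenfunction associated with $\lambda_m(\sigma)$. *)

theory Defs
  imports "HOL-Analysis.Analysis"
begin

definition grid :: "nat \<Rightarrow> nat \<Rightarrow> real" where
  "grid n k = real k / real n"

definition sf_eigenpair :: "nat \<Rightarrow> real \<Rightarrow> real \<Rightarrow> (real \<Rightarrow> real) \<Rightarrow> bool" where
  "sf_eigenpair n \<sigma> lam u \<longleftrightarrow>
     continuous_on {0..1} u \<and>
     (\<exists>x\<in>{0..1}. u x \<noteq> 0) \<and>
     u 0 = 0 \<and> u 1 = 0 \<and>
     (\<forall>k\<in>{1..n}. \<forall>x\<in>{grid n (k - 1)<..<grid n k}.
         u differentiable (at x) \<and>
         (deriv u has_real_derivative (- lam * u x)) (at x)) \<and>
     (\<forall>k\<in>{1..n - 1}. \<exists>dL dR.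
         (deriv u \<longlongrightarrow> dL) (at_left (grid n k)) \<and>
         (deriv u \<longlongrightarrow> dR) (at_right (grid n k)) \<and>
         dR - dL = \<sigma> * u (grid n k))"

definition sf_eigenvalue :: "nat \<Rightarrow> real \<Rightarrow> real \<Rightarrow> bool" where
  "sf_eigenvalue n \<sigma> lam \<longleftrightarrow> (\<exists>u. sf_eigenpair n \<sigma> lam u)"

definition sf_mth_eigenvalue :: "nat \<Rightarrow> real \<Rightarrow> nat \<Rightarrow> real \<Rightarrow> bool" where
  "sf_mth_eigenvalue n \<sigma> m lam \<longleftrightarrow>
     sf_eigenvalue n \<sigma> lam \<and>
     finite {\<mu>. sf_eigenvalue n \<sigma> \<mu> \<and> \<mu> < lam} \<and>
     card {\<mu>. sf_eigenvalue n \<sigma> \<mu> \<and> \<mu> < lam} = m - 1"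

end

theory Submission
  imports Defs
begin

(*
  Between consecutive nodes an eigenfunction solves u'' = -lam u, so it is the interpolating
  solution of its nodal values, and the jump condition becomes the three-term recurrence
  u(x_(k+1)) + u(x_(k-1)) = T u(x_k) with T = 2 cos(g/n) + sigma sin(g/n)/g, g = sqrt lam.
  Together with u(x_0) = u(x_n) = 0 this forces T = 2 cos(j pi/n) for some 1 <= j <= n-1 and
  u(x_k) = u(x_1) sin(k j pi/n) / sin(j pi/n).  Conversely every such j gives an eigenvalue, and
  since T decreases strictly in g on (0, n pi], the eigenvalues below (n pi)^2 are
  g_1^2 < ... < g_(n-1)^2 with T(g_j) = 2 cos(j pi/n).  Counting the eigenvalues below lam_m
  shows j = m, and the normalization on I_1 gives u(x_1) = sin(g/n).
*)

section \<open>Fundamental solutions of y'' = -\<mu> y\<close>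

definition cos_mu :: "real \<Rightarrow> real \<Rightarrow> real" where
  "cos_mu \<mu> x = (if \<mu> > 0 then cos (sqrt \<mu> * x) else if \<mu> = 0 then 1 else cosh (sqrt (-\<mu>) * x))"

definition sin_mu :: "real \<Rightarrow> real \<Rightarrow> real" where
  "sin_mu \<mu> x = (if \<mu> > 0 then sin (sqrt \<mu> * x) / sqrt \<mu> else if \<mu> = 0 then x
     else sinh (sqrt (-\<mu>) * x) / sqrt (-\<mu>))"

lemma cos_mu_sin_mu_square:
  assumes "g > 0" shows "cos_mu (g\<^sup>2) x = cos (g * x)" and "sin_mu (g\<^sup>2) x = sin (g * x) / g"
  using assms by (simp_all add: cos_mu_def sin_mu_def)

lemma cos_mu_0 [simp]: "cos_mu \<mu> 0 = 1" and sin_mu_0 [simp]: "sin_mu \<mu> 0 = 0"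
  by (auto simp: cos_mu_def sin_mu_def)

lemma sqrt_neg_mult_sqrt_neg: "\<mu> < 0 \<Longrightarrow> sqrt (-\<mu>) * (sqrt (-\<mu>) * z) = -\<mu> * z"
  by (simp flip: mult.assoc)

lemma has_real_derivative_cos_mu: "(cos_mu \<mu> has_real_derivative (-\<mu> * sin_mu \<mu> x)) (at x)"
proof -
  consider "\<mu> > 0" | "\<mu> = 0" | "\<mu> < 0" by linarith
  then show ?thesis
  proof cases
    case 1
    then have "cos_mu \<mu> = (\<lambda>x. cos (sqrt \<mu> * x))" by (auto simp: cos_mu_def)
    with 1 show ?thesis by (auto intro!: derivative_eq_intros simp: sin_mu_def field_simps)
  next
    case 2
    then have "cos_mu \<mu> = (\<lambda>x. 1)" by (auto simp: cos_mu_def)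
    with 2 show ?thesis by simp
  next
    case 3
    then have "cos_mu \<mu> = (\<lambda>x. cosh (sqrt (-\<mu>) * x))" by (auto simp: cos_mu_def)
    with 3 show ?thesis
      by (auto intro!: derivative_eq_intros simp: sin_mu_def field_simps sqrt_neg_mult_sqrt_neg)
  qed
qed

lemma has_real_derivative_sin_mu: "(sin_mu \<mu> has_real_derivative cos_mu \<mu> x) (at x)"
proof -
  consider "\<mu> > 0" | "\<mu> = 0" | "\<mu> < 0" by linarith
  then show ?thesis
  proof cases
    case 1
    then have "sin_mu \<mu> = (\<lambda>x. sin (sqrt \<mu> * x) / sqrt \<mu>)" by (auto simp: sin_mu_def)
    with 1 show ?thesis by (auto intro!: derivative_eq_intros simp: cos_mu_def field_simps)
  next
    case 2
    then have "sin_mu \<mu> = (\<lambda>x. x)" by (auto simp: sin_mu_def)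
    with 2 show ?thesis by (auto intro!: derivative_eq_intros simp: cos_mu_def)
  next
    case 3
    then have "sin_mu \<mu> = (\<lambda>x. sinh (sqrt (-\<mu>) * x) / sqrt (-\<mu>))" by (auto simp: sin_mu_def)
    with 3 show ?thesis
      by (auto intro!: derivative_eq_intros simp: cos_mu_def field_simps sqrt_neg_mult_sqrt_neg)
  qed
qed

lemma has_real_derivative_cos_mu_comp [derivative_intros]:
  "(g has_real_derivative g') (at x within s) \<Longrightarrow>
    ((\<lambda>x. cos_mu \<mu> (g x)) has_real_derivative (-\<mu> * sin_mu \<mu> (g x)) * g') (at x within s)"
  using DERIV_chain2[OF has_real_derivative_cos_mu] by blast

lemma has_real_derivative_sin_mu_comp [derivative_intros]:
  "(g has_real_derivative g') (at x within s) \<Longrightarrow>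
    ((\<lambda>x. sin_mu \<mu> (g x)) has_real_derivative cos_mu \<mu> (g x) * g') (at x within s)"
  using DERIV_chain2[OF has_real_derivative_sin_mu] by blast

lemma cos_mu_squared_add: "(cos_mu \<mu> x)\<^sup>2 + \<mu> * (sin_mu \<mu> x)\<^sup>2 = 1"
proof -
  consider "\<mu> > 0" | "\<mu> = 0" | "\<mu> < 0" by linarith
  then show ?thesis
    by cases (simp_all add: cos_mu_def sin_mu_def power_divide cosh_square_eq)
qed

lemma ode_solution_eq:
  fixes f f' :: "real \<Rightarrow> real"
  assumes I: "convex I" "c \<in> I" "x \<in> I"
    and f: "\<And>x. x \<in> I \<Longrightarrow> (f has_real_derivative f' x) (at x)"
    and f': "\<And>x. x \<in> I \<Longrightarrow> (f' has_real_derivative (-\<mu> * f x)) (at x)"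
  shows "f x = f c * cos_mu \<mu> (x - c) + f' c * sin_mu \<mu> (x - c)"
proof -
  define W1 where "W1 y = f y * (-\<mu> * sin_mu \<mu> (y - c)) - f' y * cos_mu \<mu> (y - c)" for y
  define W2 where "W2 y = f y * cos_mu \<mu> (y - c) - f' y * sin_mu \<mu> (y - c)" for y
  have "(W1 has_real_derivative 0) (at y within I)" "(W2 has_real_derivative 0) (at y within I)"
    if "y \<in> I" for y
  proof -
    have "(W1 has_real_derivative 0) (at y)" "(W2 has_real_derivative 0) (at y)"
      unfolding W1_def W2_def
      by (rule derivative_eq_intros f f' that refl | simp add: algebra_simps)+
    then show "(W1 has_real_derivative 0) (at y within I)" "(W2 has_real_derivative 0) (at y within I)"
      by (auto intro: has_field_derivative_at_within)
  qed
  then obtain k1 k2 where "\<forall>y\<in>I. W1 y = k1" "\<forall>y\<in>I. W2 y = k2"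
    using has_field_derivative_zero_constant[OF I(1)] by metis
  then have "W1 x = W1 c" "W2 x = W2 c" using I by auto
  then have W: "W1 x = - f' c" "W2 x = f c" by (simp_all add: W1_def W2_def)
  have "f x = f x * ((cos_mu \<mu> (x - c))\<^sup>2 + \<mu> * (sin_mu \<mu> (x - c))\<^sup>2)"
    by (simp add: cos_mu_squared_add)
  also have "\<dots> = cos_mu \<mu> (x - c) * W2 x - sin_mu \<mu> (x - c) * W1 x"
    by (simp add: W1_def W2_def algebra_simps power2_eq_square)
  finally show ?thesis using W by (simp add: algebra_simps)
qed

definition dirichlet_sol :: "real \<Rightarrow> real \<Rightarrow> real \<Rightarrow> real \<Rightarrow> real \<Rightarrow> real \<Rightarrow> real" where
  "dirichlet_sol \<mu> a b ya yb x = (ya * sin_mu \<mu> (b - x) + yb * sin_mu \<mu> (x - a)) / sin_mu \<mu> (b - a)"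

definition dirichlet_sol_deriv :: "real \<Rightarrow> real \<Rightarrow> real \<Rightarrow> real \<Rightarrow> real \<Rightarrow> real \<Rightarrow> real" where
  "dirichlet_sol_deriv \<mu> a b ya yb x = (- ya * cos_mu \<mu> (b - x) + yb * cos_mu \<mu> (x - a)) / sin_mu \<mu> (b - a)"

lemma has_real_derivative_dirichlet_sol:
  "(dirichlet_sol \<mu> a b ya yb has_real_derivative dirichlet_sol_deriv \<mu> a b ya yb x) (at x)"
  unfolding dirichlet_sol_def [abs_def] dirichlet_sol_deriv_def
  by (intro DERIV_cdivide) (auto intro!: derivative_eq_intros)

lemma has_real_derivative_dirichlet_sol_deriv:
  "(dirichlet_sol_deriv \<mu> a b ya yb has_real_derivative (-\<mu> * dirichlet_sol \<mu> a b ya yb x)) (at x)"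
proof -
  have "((\<lambda>x. - ya * cos_mu \<mu> (b - x) + yb * cos_mu \<mu> (x - a)) has_real_derivative
      -\<mu> * (ya * sin_mu \<mu> (b - x) + yb * sin_mu \<mu> (x - a))) (at x)"
    by (auto intro!: derivative_eq_intros simp: algebra_simps)
  from DERIV_cdivide[OF this, of "sin_mu \<mu> (b - a)"] show ?thesis
    unfolding dirichlet_sol_def dirichlet_sol_deriv_def [abs_def] by simp
qed

lemma isCont_dirichlet_sol: "isCont (dirichlet_sol \<mu> a b ya yb) x"
  and isCont_dirichlet_sol_deriv: "isCont (dirichlet_sol_deriv \<mu> a b ya yb) x"
  using has_real_derivative_dirichlet_sol has_real_derivative_dirichlet_sol_deriv
  by (blast intro: DERIV_isCont)+

lemma dirichlet_sol_boundary:
  assumes "sin_mu \<mu> (b - a) \<noteq> 0"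
  shows "dirichlet_sol \<mu> a b ya yb a = ya" and "dirichlet_sol \<mu> a b ya yb b = yb"
  using assms by (simp_all add: dirichlet_sol_def)

lemma dirichlet_sol_deriv_jump:
  "dirichlet_sol_deriv \<mu> x (x + h) y0 y1 x - dirichlet_sol_deriv \<mu> (x - h) x ym y0 x =
    (y1 + ym - 2 * cos_mu \<mu> h * y0) / sin_mu \<mu> h"
  by (simp add: dirichlet_sol_deriv_def diff_divide_distrib add_divide_distrib)

lemma ode_dirichlet_unique:
  fixes f f' :: "real \<Rightarrow> real"
  assumes ab: "a < b" and S: "sin_mu \<mu> (b - a) \<noteq> 0" and cont: "continuous_on {a..b} f"
    and f: "\<And>x. x \<in> {a<..<b} \<Longrightarrow> (f has_real_derivative f' x) (at x)"
    and f': "\<And>x. x \<in> {a<..<b} \<Longrightarrow> (f' has_real_derivative (-\<mu> * f x)) (at x)"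
    and fa: "f a = 0" and fb: "f b = 0"
    and x: "x \<in> {a<..<b}"
  shows "f x = 0"
proof -
  define c where "c = (a + b) / 2"
  have c: "c \<in> {a<..<b}" using ab by (simp add: c_def)
  define H where "H y = f c * cos_mu \<mu> (y - c) + f' c * sin_mu \<mu> (y - c)" for y
  define H' where "H' y = -\<mu> * f c * sin_mu \<mu> (y - c) + f' c * cos_mu \<mu> (y - c)" for y
  have H: "(H has_real_derivative H' y) (at y)" for y
    unfolding H_def [abs_def] H'_def by (auto intro!: derivative_eq_intros)
  have H': "(H' has_real_derivative (-\<mu> * H y)) (at y)" for y
    unfolding H_def H'_def [abs_def] by (auto intro!: derivative_eq_intros simp: algebra_simps)
  have fH: "f y - H y = 0" if "y \<in> {a<..<b}" for y
    using ode_solution_eq[OF convex_real_interval(8) c that f f'] by (simp add: H_def)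
  have "continuous_on {a..b} H"
    by (intro continuous_at_imp_continuous_on ballI DERIV_isCont[OF H])
  from continuous_on_diff[OF cont this] have "continuous_on {a..b} (\<lambda>y. f y - H y)" .
  then have "f a - H a = 0" "f b - H b = 0"
    using continuous_constant_on_closure[of "{a<..<b}" "\<lambda>y. f y - H y"] fH ab by auto
  then have Ha: "H a = 0" and Hb: "H b = 0" using fa fb by auto
  have Hexp: "H y = H a * cos_mu \<mu> (y - a) + H' a * sin_mu \<mu> (y - a)" for y
    using ode_solution_eq[OF convex_UNIV UNIV_I UNIV_I H H'] .
  have "H' a = 0" using Hexp[of b] Ha Hb S by simp
  then have "H x = 0" using Hexp[of x] Ha by simp
  with fH[OF x] show ?thesis by simp
qed

lemma sin_mu_pos:
  assumes "x > 0" "\<mu> < (pi / x)\<^sup>2"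
  shows "sin_mu \<mu> x > 0"
proof (cases "\<mu> > 0")
  case True
  have "sqrt \<mu> < sqrt ((pi / x)\<^sup>2)" using assms(2) by (simp only: real_sqrt_less_iff)
  with assms(1) have "sqrt \<mu> < pi / x" by simp
  with assms(1) True have "sin (sqrt \<mu> * x) > 0" by (intro sin_gt_zero) (auto simp: field_simps)
  with True show ?thesis by (simp add: sin_mu_def)
qed (use assms(1) in \<open>auto simp: sin_mu_def\<close>)

section \<open>One-sided limits and piecewise gluing\<close>

lemma tendsto_at_left_agree:
  fixes a x :: real
  assumes "isCont g x" "a < x" "\<And>y. y \<in> {a<..<x} \<Longrightarrow> f y = g y"
  shows "(f \<longlongrightarrow> g x) (at_left x)"
proof -
  have "(g \<longlongrightarrow> g x) (at_left x)"
    using assms(1) unfolding isCont_def by (rule tendsto_mono[OF at_within_le_at])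
  moreover have "eventually (\<lambda>y. g y = f y) (at_left x)"
    using eventually_at_left_real[OF assms(2)] by eventually_elim (use assms(3) in auto)
  ultimately show ?thesis by (rule Lim_transform_eventually)
qed

lemma tendsto_at_right_agree:
  fixes b x :: real
  assumes "isCont g x" "x < b" "\<And>y. y \<in> {x<..<b} \<Longrightarrow> f y = g y"
  shows "(f \<longlongrightarrow> g x) (at_right x)"
proof -
  have "(g \<longlongrightarrow> g x) (at_right x)"
    using assms(1) unfolding isCont_def by (rule tendsto_mono[OF at_within_le_at])
  moreover have "eventually (\<lambda>y. g y = f y) (at_right x)"
    using eventually_at_right_real[OF assms(2)] by eventually_elim (use assms(3) in auto)
  ultimately show ?thesis by (rule Lim_transform_eventually)
qed

lemma floor_glue_eq:
  fixes \<Psi> :: "int \<Rightarrow> real \<Rightarrow> 'a" and c :: real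
  assumes c: "c > 0"
    and glue: "\<And>i. \<Psi> i ((of_int i + 1) / c) = \<Psi> (i + 1) ((of_int i + 1) / c)"
    and y: "of_int i / c \<le> y" "y \<le> (of_int i + 1) / c"
  shows "\<Psi> \<lfloor>y * c\<rfloor> y = \<Psi> i y"
proof (cases "y = (of_int i + 1) / c")
  case True
  with c have "\<lfloor>y * c\<rfloor> = i + 1" by simp
  with True glue show ?thesis by simp
next
  case False
  with y c have "of_int i \<le> y * c" "y * c < of_int i + 1" by (auto simp: field_simps)
  then have "\<lfloor>y * c\<rfloor> = i" by (simp add: floor_eq_iff)
  then show ?thesis by simp
qed

lemma isCont_floor_glue:
  fixes \<Psi> :: "int \<Rightarrow> real \<Rightarrow> real" and c :: real
  assumes c: "c > 0"
    and glue: "\<And>i. \<Psi> i ((of_int i + 1) / c) = \<Psi> (i + 1) ((of_int i + 1) / c)"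
    and cont: "\<And>i. isCont (\<Psi> i) x"
  shows "isCont (\<lambda>y. \<Psi> \<lfloor>y * c\<rfloor> y) x"
proof -
  define i where "i = \<lfloor>x * c\<rfloor>"
  define i' where "i' = \<lceil>x * c\<rceil> - 1"
  have i: "of_int i / c \<le> x" "x < (of_int i + 1) / c"
    using c unfolding i_def by (auto simp: field_simps) linarith
  have i': "of_int i' / c < x" "x \<le> (of_int i' + 1) / c"
    using c unfolding i'_def by (auto simp: field_simps) linarith+
  note eq = floor_glue_eq[OF c glue]
  have "((\<lambda>y. \<Psi> \<lfloor>y * c\<rfloor> y) \<longlongrightarrow> \<Psi> i' x) (at_left x)"
    by (rule tendsto_at_left_agree[OF cont i'(1)]) (use i' eq in auto)
  moreover have "((\<lambda>y. \<Psi> \<lfloor>y * c\<rfloor> y) \<longlongrightarrow> \<Psi> i x) (at_right x)"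
    by (rule tendsto_at_right_agree[OF cont i(2)]) (use i eq in auto)
  moreover have "\<Psi> \<lfloor>x * c\<rfloor> x = \<Psi> i' x" "\<Psi> \<lfloor>x * c\<rfloor> x = \<Psi> i x"
    using eq[of i' x] eq[of i x] i i' by simp_all
  ultimately show ?thesis unfolding isCont_def filterlim_at_split by simp
qed

section \<open>The three-term recurrence a(k+1) + a(k-1) = T a(k)\<close>

lemma recurrence_unique:
  fixes a b :: "nat \<Rightarrow> real"
  assumes a: "\<And>k. 1 \<le> k \<Longrightarrow> k \<le> n - 1 \<Longrightarrow> a (k + 1) + a (k - 1) = T * a k"
    and b: "\<And>k. 1 \<le> k \<Longrightarrow> k \<le> n - 1 \<Longrightarrow> b (k + 1) + b (k - 1) = T * b k"
    and "a 0 = b 0" "a 1 = b 1" "k \<le> n"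
  shows "a k = b k"
  using \<open>k \<le> n\<close>
proof (induction k rule: less_induct)
  case (less k)
  show ?case
  proof (cases "k \<le> 1")
    case True
    with assms(3,4) show ?thesis by (cases k) auto
  next
    case False
    then obtain j where k: "k = j + 2" by (metis add.commute le_Suc_ex not_less_eq_eq one_add_one plus_1_eq_Suc)
    with less.prems have j: "1 \<le> j + 1" "j + 1 \<le> n - 1" by auto
    have "a (j + 2) = T * a (j + 1) - a j" "b (j + 2) = T * b (j + 1) - b j"
      using a[OF j] b[OF j] by (simp_all add: algebra_simps numeral_2_eq_2)
    with less.IH[of j] less.IH[of "j + 1"] less.prems show ?thesis by (simp add: k)
  qed
qed

lemma recurrence_growth:
  fixes b :: "nat \<Rightarrow> real"
  assumes rec: "\<And>k. 1 \<le> k \<Longrightarrow> k \<le> n - 1 \<Longrightarrow> b (k + 1) + b (k - 1) = T * b k"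
    and T: "T \<ge> 2" and b: "b 0 = 0" "b 1 = 1"
    and k: "k \<le> n"
  shows "real k \<le> b k"
proof -
  have step: "k + 1 \<le> n \<longrightarrow> 1 \<le> b (k + 1) - b k \<and> real k + 1 \<le> b (k + 1)" for k
  proof (induction k)
    case 0
    then show ?case using b by simp
  next
    case (Suc k)
    show ?case
    proof
      assume k: "Suc k + 1 \<le> n"
      with Suc have IH: "1 \<le> b (k + 1) - b k" "real k + 1 \<le> b (k + 1)" by auto
      have "b (k + 2) - b (k + 1) = (T - 2) * b (k + 1) + (b (k + 1) - b k)"
        using rec[of "k + 1"] k by (simp add: algebra_simps numeral_2_eq_2)
      moreover have "(T - 2) * b (k + 1) \<ge> 0" using T IH(2) by simp
      ultimately show "1 \<le> b (Suc k + 1) - b (Suc k) \<and> real (Suc k) + 1 \<le> b (Suc k + 1)"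
        using IH by (simp add: numeral_2_eq_2)
    qed
  qed
  show ?thesis
  proof (cases k)
    case (Suc j)
    then show ?thesis using step[of j] k by simp
  qed (simp add: b)
qed

text \<open>If \<open>\<bar>T\<bar> \<ge> 2\<close>, then with s the sign of T the sequence s^(k+1) a(k) / a(1) grows at least
  linearly, so it cannot vanish at n.\<close>

lemma recurrence_trace_bound:
  fixes a :: "nat \<Rightarrow> real"
  assumes rec: "\<And>k. 1 \<le> k \<Longrightarrow> k \<le> n - 1 \<Longrightarrow> a (k + 1) + a (k - 1) = T * a k"
    and a: "a 0 = 0" "a n = 0" "a 1 \<noteq> 0" and n: "n \<ge> 1"
  shows "\<bar>T\<bar> < 2"
proof (rule ccontr)
  assume "\<not> \<bar>T\<bar> < 2"
  then obtain s :: real where s: "s = 1 \<or> s = -1" "s * T \<ge> 2"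
    by (metis abs_ge_self abs_if linorder_not_le mult_1 mult_minus1)
  define b where "b k = s ^ (k + 1) * a k / a 1" for k
  have s2: "s * s = 1" using s(1) by auto
  have rec': "b (k + 1) + b (k - 1) = (s * T) * b k" if "1 \<le> k" "k \<le> n - 1" for k
  proof -
    obtain j where k: "k = Suc j" using \<open>1 \<le> k\<close> by (cases k) auto
    have p: "s ^ (j + 3) = s ^ (j + 1)" "s ^ (j + 2) = s * s ^ (j + 1)"
      using s2 by (simp_all add: numeral_3_eq_3 numeral_2_eq_2 mult.assoc [symmetric])
    have "b (k + 1) + b (k - 1) = s ^ (j + 1) * (a (k + 1) + a (k - 1)) / a 1"
      unfolding b_def k by (simp add: p(1)[simplified numeral_3_eq_3] s2 add_divide_distrib algebra_simps)
    also have "\<dots> = (s * T) * b k"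
      using rec[OF that] unfolding b_def k by (simp add: p(2)[simplified numeral_2_eq_2] s2 algebra_simps)
    finally show ?thesis .
  qed
  have "b 0 = 0" "b 1 = 1" using a s2 by (simp_all add: b_def)
  from recurrence_growth[OF rec' s(2) this order_refl] have "real n \<le> b n" .
  with a n show False by (simp add: b_def)
qed

lemma sin_mult_succ_add_sin_mult_pred:
  fixes x \<theta> :: real
  shows "sin ((x + 1) * \<theta>) + sin ((x - 1) * \<theta>) = 2 * cos \<theta> * sin (x * \<theta>)"
  using sin_add[of "x * \<theta>" \<theta>] sin_diff[of "x * \<theta>" \<theta>] by (simp add: algebra_simps)

lemma recurrence_sine_solution:
  fixes a :: "nat \<Rightarrow> real"
  assumes rec: "\<And>k. 1 \<le> k \<Longrightarrow> k \<le> n - 1 \<Longrightarrow> a (k + 1) + a (k - 1) = T * a k"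
    and T: "T = 2 * cos \<theta>" and \<theta>: "sin \<theta> \<noteq> 0" and a: "a 0 = 0" and k: "k \<le> n"
  shows "a k = a 1 * sin (real k * \<theta>) / sin \<theta>"
proof (rule recurrence_unique[OF rec _ _ _ k])
  fix k :: nat assume "1 \<le> k"
  then have "a 1 * sin (real (k + 1) * \<theta>) / sin \<theta> + a 1 * sin (real (k - 1) * \<theta>) / sin \<theta> =
    a 1 * (sin ((real k + 1) * \<theta>) + sin ((real k - 1) * \<theta>)) / sin \<theta>"
    by (simp add: of_nat_diff add_divide_distrib distrib_left add.commute)
  also have "\<dots> = T * (a 1 * sin (real k * \<theta>) / sin \<theta>)"
    by (simp only: sin_mult_succ_add_sin_mult_pred T) simp
  finally show "a 1 * sin (real (k + 1) * \<theta>) / sin \<theta> + a 1 * sin (real (k - 1) * \<theta>) / sin \<theta> =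
    T * (a 1 * sin (real k * \<theta>) / sin \<theta>)" .
qed (use a \<theta> in simp_all)

lemma recurrence_chebyshev:
  fixes a :: "nat \<Rightarrow> real"
  assumes rec: "\<And>k. 1 \<le> k \<Longrightarrow> k \<le> n - 1 \<Longrightarrow> a (k + 1) + a (k - 1) = T * a k"
    and a: "a 0 = 0" "a n = 0" "a 1 \<noteq> 0" and n: "n \<ge> 1"
  obtains j where "j \<in> {1..n - 1}" "T = 2 * cos (real j * pi / real n)"
    "\<And>k. k \<le> n \<Longrightarrow> a k = a 1 * sin (real k * real j * pi / real n) / sin (real j * pi / real n)"
proof -
  define \<theta> where "\<theta> = arccos (T / 2)"
  have "\<bar>T\<bar> < 2" by (rule recurrence_trace_bound[OF rec a n])
  then have \<theta>: "0 < \<theta>" "\<theta> < pi" "T = 2 * cos \<theta>"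
    using arccos_lt_bounded[of "T / 2"] cos_arccos[of "T / 2"] by (auto simp: \<theta>_def)
  then have sin\<theta>: "sin \<theta> \<noteq> 0" by (simp add: sin_gt_zero less_imp_neq [symmetric])
  note sol = recurrence_sine_solution[where n = n, OF rec \<theta>(3) sin\<theta> a(1)]
  have "sin (real n * \<theta>) = 0" using sol[of n] a(2,3) sin\<theta> by simp
  then obtain i :: int where i: "real n * \<theta> = of_int i * pi" by (auto simp: sin_zero_iff_int2)
  from \<theta> n have "0 < of_int i * pi" "of_int i * pi < real n * pi" by (auto simp flip: i)
  then have "0 < i" "i < int n" by (auto simp: zero_less_mult_iff)
  then have j: "nat i \<in> {1..n - 1}" by auto
  have \<theta>j: "\<theta> = real (nat i) * pi / real n" using i n \<open>0 < i\<close> by (simp add: field_simps)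
  show ?thesis
    by (rule that[OF j]) (use \<theta>(3) sol in \<open>simp_all add: \<theta>j mult.assoc\<close>)
qed

section \<open>Eigenpairs and their nodal values\<close>

lemma grid_diff: "1 \<le> k \<Longrightarrow> grid n k - grid n (k - 1) = 1 / real n"
  by (simp add: grid_def of_nat_diff diff_divide_distrib)

lemma grid_0 [simp]: "grid n 0 = 0" and grid_self [simp]: "n > 0 \<Longrightarrow> grid n n = 1"
  by (simp_all add: grid_def)

lemma grid_less: "n > 0 \<Longrightarrow> i < j \<Longrightarrow> grid n i < grid n j"
  by (simp add: grid_def divide_strict_right_mono)

lemma grid_nonneg: "grid n k \<ge> 0"
  by (simp add: grid_def)

lemma grid_le_1: "k \<le> n \<Longrightarrow> grid n k \<le> 1"
  by (cases "n = 0") (simp_all add: grid_def)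

lemma grid_cover:
  assumes n: "n \<ge> 1" and x: "x \<in> {0..1}"
  obtains k where "k \<le> n" "x = grid n k" | k where "k \<in> {1..n}" "x \<in> {grid n (k - 1)<..<grid n k}"
proof -
  define k where "k = nat \<lfloor>x * real n\<rfloor>"
  have xn: "0 \<le> x * real n" "x * real n \<le> real n" using x n by (auto simp: mult_left_le_one_le)
  then have k: "real k \<le> x * real n" "x * real n < real k + 1"
    unfolding k_def by (auto simp: of_nat_nat)
  show ?thesis
  proof (cases "x * real n = real k")
    case True
    with xn n show ?thesis by (intro that(1)[of k]) (auto simp: grid_def field_simps)
  next
    case False
    with k xn have "real k < real n" by linarith
    with False k n show ?thesis by (intro that(2)[of "k + 1"]) (auto simp: grid_def field_simps)
  qed
qed

lemma sf_eigenpair_on_cell: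
  assumes ep: "sf_eigenpair n \<sigma> \<mu> v" and k: "1 \<le> k" "k \<le> n"
    and S: "sin_mu \<mu> (1 / real n) \<noteq> 0"
    and x: "x \<in> {grid n (k - 1)<..<grid n k}"
  shows "v x = dirichlet_sol \<mu> (grid n (k - 1)) (grid n k) (v (grid n (k - 1))) (v (grid n k)) x"
    and "deriv v x = dirichlet_sol_deriv \<mu> (grid n (k - 1)) (grid n k) (v (grid n (k - 1))) (v (grid n k)) x"
proof -
  define a where "a = grid n (k - 1)"
  define b where "b = grid n k"
  define \<Phi> where "\<Phi> = dirichlet_sol \<mu> a b (v a) (v b)"
  define \<Phi>' where "\<Phi>' = dirichlet_sol_deriv \<mu> a b (v a) (v b)"
  have ab: "a < b" using k by (simp add: a_def b_def grid_less)
  have Sab: "sin_mu \<mu> (b - a) \<noteq> 0" using S grid_diff[OF k(1)] by (simp add: a_def b_def)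
  have v: "(v has_real_derivative deriv v y) (at y)"
    and v': "(deriv v has_real_derivative (-\<mu> * v y)) (at y)" if "y \<in> {a<..<b}" for y
    using ep k that unfolding sf_eigenpair_def a_def b_def
    by (auto simp: DERIV_deriv_iff_real_differentiable)
  have "continuous_on {a..b} v"
    using ep grid_nonneg[of n "k - 1"] grid_le_1[OF k(2)] unfolding sf_eigenpair_def a_def b_def
    by (auto intro: continuous_on_subset)
  moreover have "continuous_on {a..b} \<Phi>"
    unfolding \<Phi>_def by (intro continuous_at_imp_continuous_on ballI isCont_dirichlet_sol)
  ultimately have cont: "continuous_on {a..b} (\<lambda>y. v y - \<Phi> y)"
    by (rule continuous_on_diff)
  have "v y - \<Phi> y = 0" if "y \<in> {a<..<b}" for y
  proof (rule ode_dirichlet_unique[OF ab Sab cont _ _ _ _ that])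
    fix z assume z: "z \<in> {a<..<b}"
    show "((\<lambda>y. v y - \<Phi> y) has_real_derivative deriv v z - \<Phi>' z) (at z)"
      unfolding \<Phi>_def \<Phi>'_def by (intro DERIV_diff v z has_real_derivative_dirichlet_sol)
    show "((\<lambda>y. deriv v y - \<Phi>' y) has_real_derivative (-\<mu> * (v z - \<Phi> z))) (at z)"
      using DERIV_diff[OF v'[OF z] has_real_derivative_dirichlet_sol_deriv]
      unfolding \<Phi>_def \<Phi>'_def by (simp add: algebra_simps)
  qed (use Sab dirichlet_sol_boundary in \<open>simp_all add: \<Phi>_def\<close>)
  then have eq: "\<And>y. y \<in> {a<..<b} \<Longrightarrow> \<Phi> y = v y" by simp
  have xI: "x \<in> {a<..<b}" using x by (simp add: a_def b_def)
  show "v x = dirichlet_sol \<mu> (grid n (k - 1)) (grid n k) (v (grid n (k - 1))) (v (grid n k)) x"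
    using eq[OF xI] by (simp add: \<Phi>_def a_def b_def)
  have "(\<Phi> has_real_derivative \<Phi>' x) (at x)"
    unfolding \<Phi>_def \<Phi>'_def by (rule has_real_derivative_dirichlet_sol)
  then have "(v has_real_derivative \<Phi>' x) (at x)"
    by (rule has_field_derivative_transform_within_open[OF _ open_greaterThanLessThan xI eq])
  from DERIV_unique[OF v[OF xI] this]
  show "deriv v x = dirichlet_sol_deriv \<mu> (grid n (k - 1)) (grid n k) (v (grid n (k - 1))) (v (grid n k)) x"
    by (simp add: \<Phi>'_def a_def b_def)
qed

lemma sf_eigenpair_node_recurrence:
  assumes ep: "sf_eigenpair n \<sigma> \<mu> v" and k: "1 \<le> k" "k \<le> n - 1"
    and S: "sin_mu \<mu> (1 / real n) \<noteq> 0"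
  shows "v (grid n (k + 1)) + v (grid n (k - 1)) =
    (2 * cos_mu \<mu> (1 / real n) + \<sigma> * sin_mu \<mu> (1 / real n)) * v (grid n k)"
proof -
  define h where "h = 1 / real n"
  have "grid n k - grid n (k - 1) = h" "grid n (k + 1) - grid n k = h"
    using grid_diff[OF k(1), of n] grid_diff[of "k + 1" n] by (simp_all add: h_def)
  then have grid_k: "grid n (k - 1) = grid n k - h" "grid n (k + 1) = grid n k + h" by linarith+
  have "h > 0" using k by (simp add: h_def)
  define D1 where "D1 = dirichlet_sol_deriv \<mu> (grid n k - h) (grid n k) (v (grid n (k - 1))) (v (grid n k))"
  define D2 where "D2 = dirichlet_sol_deriv \<mu> (grid n k) (grid n k + h) (v (grid n k)) (v (grid n (k + 1)))"
  obtain dL dR where L: "(deriv v \<longlongrightarrow> dL) (at_left (grid n k))"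
    and R: "(deriv v \<longlongrightarrow> dR) (at_right (grid n k))" and jump: "dR - dL = \<sigma> * v (grid n k)"
    using ep k unfolding sf_eigenpair_def by fastforce
  have "(deriv v \<longlongrightarrow> D1 (grid n k)) (at_left (grid n k))"
    using sf_eigenpair_on_cell(2)[OF ep _ _ S, of k] k grid_k \<open>h > 0\<close>
    by (intro tendsto_at_left_agree[of _ _ "grid n (k - 1)"]) (auto simp: D1_def isCont_dirichlet_sol_deriv grid_less)
  then have "dL = D1 (grid n k)" using L tendsto_unique[OF trivial_limit_at_left_real] by blast
  moreover have "(deriv v \<longlongrightarrow> D2 (grid n k)) (at_right (grid n k))"
    using sf_eigenpair_on_cell(2)[OF ep _ _ S, of "k + 1"] k grid_k \<open>h > 0\<close>
    by (intro tendsto_at_right_agree[of _ _ "grid n (k + 1)"]) (auto simp: D2_def isCont_dirichlet_sol_deriv grid_less)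
  then have "dR = D2 (grid n k)" using R tendsto_unique[OF trivial_limit_at_right_real] by blast
  ultimately have "(v (grid n (k + 1)) + v (grid n (k - 1)) - 2 * cos_mu \<mu> h * v (grid n k)) / sin_mu \<mu> h
      = \<sigma> * v (grid n k)"
    using jump dirichlet_sol_deriv_jump by (simp add: D1_def D2_def)
  with S show ?thesis by (simp add: h_def divide_eq_eq algebra_simps)
qed

lemma sf_eigenpair_node_1_neq_0:
  assumes ep: "sf_eigenpair n \<sigma> \<mu> v" and n: "n \<ge> 1"
    and S: "sin_mu \<mu> (1 / real n) \<noteq> 0"
  shows "v (grid n 1) \<noteq> 0"
proof
  assume v1: "v (grid n 1) = 0"
  have nodes: "v (grid n k) = 0" if "k \<le> n" for k
    using recurrence_unique[where b = "\<lambda>_. 0", OF sf_eigenpair_node_recurrence[OF ep _ _ S] _ _ _ that]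
      ep v1 by (simp add: sf_eigenpair_def)
  have "v x = 0" if "x \<in> {0..1}" for x
    using n that
  proof (cases rule: grid_cover)
    case (2 k)
    then have "k \<le> n" "k - 1 \<le> n" by auto
    with 2 show ?thesis using sf_eigenpair_on_cell(1)[OF ep _ _ S, of k x] nodes
      by (simp add: dirichlet_sol_def)
  qed (use nodes in simp)
  with ep show False by (auto simp: sf_eigenpair_def)
qed

lemma sf_eigenpair_nodes:
  assumes ep: "sf_eigenpair n \<sigma> \<mu> v" and n: "n \<ge> 1" and \<sigma>: "\<sigma> \<ge> 0"
    and S: "sin_mu \<mu> (1 / real n) \<noteq> 0"
  obtains j where "\<mu> > 0" "j \<in> {1..n - 1}"
    "2 * cos_mu \<mu> (1 / real n) + \<sigma> * sin_mu \<mu> (1 / real n) = 2 * cos (real j * pi / real n)"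
    "\<And>k. k \<le> n \<Longrightarrow> v (grid n k) = v (grid n 1) * sin (real k * real j * pi / real n) / sin (real j * pi / real n)"
proof -
  define T where "T = 2 * cos_mu \<mu> (1 / real n) + \<sigma> * sin_mu \<mu> (1 / real n)"
  note rec = sf_eigenpair_node_recurrence[OF ep _ _ S, folded T_def]
  have v: "v (grid n 0) = 0" "v (grid n n) = 0" "v (grid n 1) \<noteq> 0"
    using ep n sf_eigenpair_node_1_neq_0[OF ep n S] by (auto simp: sf_eigenpair_def)
  have "\<mu> > 0"
  proof (rule ccontr)
    assume "\<not> \<mu> > 0"
    then have "cos_mu \<mu> (1 / real n) \<ge> 1" "sin_mu \<mu> (1 / real n) \<ge> 0"
      by (auto simp: cos_mu_def sin_mu_def cosh_real_ge_1)
    with \<sigma> have "T \<ge> 2" unfolding T_def by (smt (verit) mult_nonneg_nonneg)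
    with recurrence_trace_bound[where a = "\<lambda>k. v (grid n k)", OF rec v n] show False by simp
  qed
  with recurrence_chebyshev[where a = "\<lambda>k. v (grid n k)", OF rec v n] that show ?thesis
    unfolding T_def by blast
qed

text \<open>The eigenfunction is glued from the cell solutions interpolating sin(k\<theta>) at the nodes.\<close>

lemma sf_eigenvalue_of_trace:
  assumes n: "n \<ge> 1" and S: "sin_mu \<mu> (1 / real n) \<noteq> 0"
    and T: "2 * cos_mu \<mu> (1 / real n) + \<sigma> * sin_mu \<mu> (1 / real n) = 2 * cos \<theta>"
    and \<theta>: "sin \<theta> \<noteq> 0" "sin (real n * \<theta>) = 0"
  shows "sf_eigenvalue n \<sigma> \<mu>"
proof -
  define x where "x i = of_int i / real n" for i :: int
  define \<Psi> where
    "\<Psi> i = dirichlet_sol \<mu> (x i) (x (i + 1)) (sin (of_int i * \<theta>)) (sin (of_int (i + 1) * \<theta>))" for i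
  define \<Psi>' where
    "\<Psi>' i = dirichlet_sol_deriv \<mu> (x i) (x (i + 1)) (sin (of_int i * \<theta>)) (sin (of_int (i + 1) * \<theta>))" for i
  define v where "v y = \<Psi> \<lfloor>y * real n\<rfloor> y" for y
  have npos: "real n > 0" using n by simp
  have h: "x (i + 1) - x i = 1 / real n" "x (i + 1) = x i + 1 / real n" "x (i - 1) = x i - 1 / real n" for i
    using npos by (simp_all add: x_def field_simps)
  have grid: "grid n k = x (int k)" for k by (simp add: grid_def x_def)
  have \<Psi>_ends: "\<Psi> i (x i) = sin (of_int i * \<theta>)" "\<Psi> i (x (i + 1)) = sin (of_int (i + 1) * \<theta>)" for i
    using dirichlet_sol_boundary[of \<mu> "x (i + 1)" "x i"] S by (simp_all add: \<Psi>_def h(1))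
  have glue: "\<Psi> i ((of_int i + 1) / real n) = \<Psi> (i + 1) ((of_int i + 1) / real n)" for i
    using \<Psi>_ends[of i] \<Psi>_ends[of "i + 1"] by (simp add: x_def)
  have v_eq: "v y = \<Psi> i y" if "x i \<le> y" "y \<le> x (i + 1)" for i y
    using floor_glue_eq[OF npos glue, of i y] that by (simp add: v_def x_def)
  have v_node: "v (grid n k) = sin (real k * \<theta>)" for k
    using v_eq[of "int k"] \<Psi>_ends[of "int k"] h[of "int k"] npos by (simp add: grid)
  have v_cell: "v y = \<Psi> (int k - 1) y" if "k \<ge> 1" "y \<in> {grid n (k - 1)<..<grid n k}" for k y
    using that v_eq[of "int k - 1" y] by (simp add: grid of_nat_diff)
  have v_deriv: "(v has_real_derivative \<Psi>' (int k - 1) y) (at y)" "deriv v y = \<Psi>' (int k - 1) y"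
    if "k \<ge> 1" "y \<in> {grid n (k - 1)<..<grid n k}" for k y
  proof -
    show "(v has_real_derivative \<Psi>' (int k - 1) y) (at y)"
      using has_real_derivative_dirichlet_sol unfolding \<Psi>_def \<Psi>'_def
      by (rule has_field_derivative_transform_within_open[OF _ open_greaterThanLessThan that(2)])
        (use v_cell[OF that(1)] in \<open>simp add: \<Psi>_def\<close>)
    then show "deriv v y = \<Psi>' (int k - 1) y" by (rule DERIV_imp_deriv)
  qed
  have "sf_eigenpair n \<sigma> \<mu> v"
    unfolding sf_eigenpair_def
  proof (intro conjI ballI)
    show "continuous_on {0..1} v"
      unfolding v_def \<Psi>_def
      by (intro continuous_at_imp_continuous_on ballI isCont_floor_glue[OF npos glue[unfolded \<Psi>_def]]
          isCont_dirichlet_sol)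
    show "\<exists>x\<in>{0..1}. v x \<noteq> 0"
      using v_node[of 1] \<theta>(1) n grid_nonneg[of n 1] grid_le_1[of 1 n] by (intro bexI[of _ "grid n 1"]) auto
    show "v 0 = 0" "v 1 = 0" using v_node[of 0] v_node[of n] \<theta>(2) npos by simp_all
  next
    fix k y assume k: "k \<in> {1..n}" and y: "y \<in> {grid n (k - 1)<..<grid n k}"
    have "(\<Psi>' (int k - 1) has_real_derivative - \<mu> * v y) (at y)"
      using has_real_derivative_dirichlet_sol_deriv v_cell[OF _ y] k unfolding \<Psi>_def \<Psi>'_def by auto
    then show "(deriv v has_real_derivative - \<mu> * v y) (at y)"
      by (rule has_field_derivative_transform_within_open[OF _ open_greaterThanLessThan y])
        (use v_deriv(2) k in auto)
    show "v differentiable at y"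
      using v_deriv(1)[OF _ y] k by (auto simp: real_differentiable_def)
  next
    fix k assume k: "k \<in> {1..n - 1}"
    have "(deriv v \<longlongrightarrow> \<Psi>' (int k - 1) (grid n k)) (at_left (grid n k))"
      using k v_deriv(2)
      by (intro tendsto_at_left_agree[of _ _ "grid n (k - 1)"]) (auto simp: \<Psi>'_def isCont_dirichlet_sol_deriv grid_less)
    moreover have "(deriv v \<longlongrightarrow> \<Psi>' (int k) (grid n k)) (at_right (grid n k))"
      using k v_deriv(2)[of "k + 1"]
      by (intro tendsto_at_right_agree[of _ _ "grid n (k + 1)"]) (auto simp: \<Psi>'_def isCont_dirichlet_sol_deriv grid_less)
    moreover have "\<Psi>' (int k) (grid n k) - \<Psi>' (int k - 1) (grid n k) = \<sigma> * v (grid n k)"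
    proof -
      have "\<Psi>' (int k) (grid n k) - \<Psi>' (int k - 1) (grid n k) =
          (sin ((real k + 1) * \<theta>) + sin ((real k - 1) * \<theta>) - 2 * cos_mu \<mu> (1 / real n) * sin (real k * \<theta>))
          / sin_mu \<mu> (1 / real n)"
        using dirichlet_sol_deriv_jump[of \<mu> "x (int k)" "1 / real n"]
        by (simp add: \<Psi>'_def grid h(2,3))
      also have "\<dots> = \<sigma> * v (grid n k)"
        unfolding sin_mult_succ_add_sin_mult_pred T [symmetric] using S by (simp add: v_node field_simps)
      finally show ?thesis .
    qed
    ultimately show "\<exists>dL dR. (deriv v \<longlongrightarrow> dL) (at_left (grid n k)) \<and>
        (deriv v \<longlongrightarrow> dR) (at_right (grid n k)) \<and> dR - dL = \<sigma> * v (grid n k)"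
      by blast
  qed
  then show ?thesis unfolding sf_eigenvalue_def by blast
qed

section \<open>The dispersion relation and the counting of eigenvalues\<close>

definition dispersion :: "nat \<Rightarrow> real \<Rightarrow> real \<Rightarrow> real" where
  "dispersion n \<sigma> g = 2 * cos (g / real n) + \<sigma> * (sin (g / real n) / g)"

lemma trace_eq_dispersion:
  "g > 0 \<Longrightarrow> 2 * cos_mu (g\<^sup>2) (1 / real n) + \<sigma> * sin_mu (g\<^sup>2) (1 / real n) = dispersion n \<sigma> g"
  by (simp add: cos_mu_sin_mu_square dispersion_def)

lemma sin_div_antimono:
  fixes s t :: real
  assumes "0 < s" "s \<le> t" "t \<le> pi"
  shows "sin t / t \<le> sin s / s"
proof (rule DERIV_nonpos_imp_nonincreasing[OF assms(2)])
  fix x assume x: "s \<le> x" "x \<le> t"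
  have "x * cos x - sin x \<le> 0 * cos 0 - sin 0"
  proof (rule DERIV_nonpos_imp_nonincreasing[of 0 x "\<lambda>x. x * cos x - sin x"])
    fix y assume "0 \<le> y" "y \<le> x"
    with x assms have "y * sin y \<ge> 0" by (simp add: sin_ge_zero)
    then show "\<exists>D. ((\<lambda>x. x * cos x - sin x) has_real_derivative D) (at y) \<and> D \<le> 0"
      by (auto intro!: derivative_eq_intros exI[of _ "- (y * sin y)"])
  qed (use x assms in auto)
  moreover have "((\<lambda>t. sin t / t) has_real_derivative (x * cos x - sin x) / x\<^sup>2) (at x)"
    using x assms by (auto intro!: derivative_eq_intros simp: field_simps power2_eq_square)
  moreover have "(x * cos x - sin x) / x\<^sup>2 \<le> 0"
    using calculation(1) by (simp add: divide_nonpos_nonneg)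
  ultimately show "\<exists>D. ((\<lambda>t. sin t / t) has_real_derivative D) (at x) \<and> D \<le> 0"
    by blast
qed

lemma dispersion_strict_antimono:
  assumes \<sigma>: "\<sigma> \<ge> 0" and n: "n \<ge> 1" and g: "0 < g1" "g1 < g2" "g2 \<le> real n * pi"
  shows "dispersion n \<sigma> g2 < dispersion n \<sigma> g1"
proof -
  have t: "0 < g1 / real n" "g1 / real n < g2 / real n" "g2 / real n \<le> pi"
    using g n by (auto simp: field_simps divide_strict_right_mono)
  have "real n * (sin (g2 / real n) / g2) \<le> real n * (sin (g1 / real n) / g1)"
    using sin_div_antimono[of "g1 / real n" "g2 / real n"] t g by (simp add: mult.commute)
  then have "real n * (sin (g2 / real n) / g2) / real n \<le> real n * (sin (g1 / real n) / g1) / real n"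
    by (rule divide_right_mono) simp
  with n have "sin (g2 / real n) / g2 \<le> sin (g1 / real n) / g1" by simp
  with \<sigma> have "\<sigma> * (sin (g2 / real n) / g2) \<le> \<sigma> * (sin (g1 / real n) / g1)"
    by (rule mult_left_mono[rotated])
  moreover have "cos (g2 / real n) < cos (g1 / real n)"
    using t by (intro cos_monotone_0_pi) auto
  ultimately show ?thesis unfolding dispersion_def by linarith
qed

lemma cos_frac_pi_strict_antimono:
  assumes "n \<ge> 1" "i < j" "j \<le> n"
  shows "cos (real j * pi / real n) < cos (real i * pi / real n)"
  using assms by (intro cos_monotone_0_pi) (auto simp: divide_strict_right_mono field_simps)

lemma dispersion_root_ex1:
  assumes n: "n \<ge> 1" and \<sigma>: "\<sigma> \<ge> 0" and j: "j \<in> {1..n - 1}"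
  shows "\<exists>!g. 0 < g \<and> g < real n * pi \<and> dispersion n \<sigma> g = 2 * cos (real j * pi / real n)"
proof -
  define y where "y = 2 * cos (real j * pi / real n)"
  define \<epsilon> where "\<epsilon> = real j * pi / 2"
  have \<epsilon>: "0 < \<epsilon>" "\<epsilon> < real n * pi" "\<epsilon> / real n \<le> pi" "\<epsilon> / real n < real j * pi / real n"
    using j n by (auto simp: \<epsilon>_def field_simps)
  have "real j * pi \<le> real n * pi" using j by (intro mult_right_mono) auto
  with n have "real j * pi / real n \<le> pi" by (simp add: divide_le_eq)
  with \<epsilon> have "y < 2 * cos (\<epsilon> / real n)" unfolding y_def by (simp add: cos_monotone_0_pi)
  also have "\<dots> \<le> dispersion n \<sigma> \<epsilon>"
    using \<epsilon> \<sigma> n by (simp add: dispersion_def sin_ge_zero)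
  finally have left: "y < dispersion n \<sigma> \<epsilon>" .
  have "j < n" using j by auto
  with n have right: "dispersion n \<sigma> (real n * pi) < y"
    using cos_frac_pi_strict_antimono[of n j n] by (simp add: dispersion_def y_def)
  have "\<forall>x. \<epsilon> \<le> x \<and> x \<le> real n * pi \<longrightarrow> isCont (dispersion n \<sigma>) x"
    using \<epsilon> n unfolding dispersion_def [abs_def] by (auto intro!: continuous_intros)
  then obtain g where g: "\<epsilon> \<le> g" "g \<le> real n * pi" "dispersion n \<sigma> g = y"
    using IVT2[of "dispersion n \<sigma>" "real n * pi" y \<epsilon>] left right \<epsilon> by auto
  with right \<epsilon> have "0 < g \<and> g < real n * pi \<and> dispersion n \<sigma> g = y"
    by (cases "g = real n * pi") auto
  moreover have "h = g" if "0 < h \<and> h < real n * pi \<and> dispersion n \<sigma> h = y" for h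
    using that calculation dispersion_strict_antimono[OF \<sigma> n, of h g] dispersion_strict_antimono[OF \<sigma> n, of g h]
    by (cases h g rule: linorder_cases) auto
  ultimately show ?thesis unfolding y_def by blast
qed

text \<open>By \<open>sf_eigenvalue_below_iff\<close>, the squares of these roots are exactly the eigenvalues
  below (n\<pi>)^2.\<close>

definition dispersion_root :: "nat \<Rightarrow> real \<Rightarrow> nat \<Rightarrow> real" where
  "dispersion_root n \<sigma> j =
    (THE g. 0 < g \<and> g < real n * pi \<and> dispersion n \<sigma> g = 2 * cos (real j * pi / real n))"

lemma dispersion_root:
  assumes "n \<ge> 1" "\<sigma> \<ge> 0" "j \<in> {1..n - 1}"
  shows "0 < dispersion_root n \<sigma> j" "dispersion_root n \<sigma> j < real n * pi"
    and "dispersion n \<sigma> (dispersion_root n \<sigma> j) = 2 * cos (real j * pi / real n)"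
  using theI' [OF dispersion_root_ex1[OF assms]] unfolding dispersion_root_def by simp_all

lemma dispersion_root_unique:
  assumes "n \<ge> 1" "\<sigma> \<ge> 0" "j \<in> {1..n - 1}"
    and "0 < g" "g < real n * pi" "dispersion n \<sigma> g = 2 * cos (real j * pi / real n)"
  shows "dispersion_root n \<sigma> j = g"
  using the1_equality [OF dispersion_root_ex1[OF assms(1-3)]] assms(4-6)
  unfolding dispersion_root_def by blast

lemma strict_mono_on_dispersion_root:
  assumes n: "n \<ge> 1" and \<sigma>: "\<sigma> \<ge> 0"
  shows "strict_mono_on {1..n - 1} (dispersion_root n \<sigma>)"
proof (rule strict_mono_onI)
  fix i j assume i: "i \<in> {1..n - 1}" and j: "j \<in> {1..n - 1}" and "i < j"
  then have cos_less: "cos (real j * pi / real n) < cos (real i * pi / real n)"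
    by (intro cos_frac_pi_strict_antimono) auto
  show "dispersion_root n \<sigma> i < dispersion_root n \<sigma> j"
  proof (rule ccontr)
    assume "\<not> ?thesis"
    then have "dispersion n \<sigma> (dispersion_root n \<sigma> i) \<le> dispersion n \<sigma> (dispersion_root n \<sigma> j)"
      using dispersion_strict_antimono[OF \<sigma> n, of "dispersion_root n \<sigma> j" "dispersion_root n \<sigma> i"]
        dispersion_root[OF n \<sigma> i] dispersion_root[OF n \<sigma> j]
      by (cases "dispersion_root n \<sigma> i = dispersion_root n \<sigma> j") auto
    with cos_less show False using dispersion_root(3)[OF n \<sigma> i] dispersion_root(3)[OF n \<sigma> j] by simp
  qed
qed

lemma sf_eigenvalue_below_iff:
  assumes n: "n \<ge> 1" and \<sigma>: "\<sigma> \<ge> 0" and \<mu>: "\<mu> < (real n * pi)\<^sup>2"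
  shows "sf_eigenvalue n \<sigma> \<mu> \<longleftrightarrow> (\<exists>j\<in>{1..n - 1}. \<mu> = (dispersion_root n \<sigma> j)\<^sup>2)"
proof
  have S: "sin_mu \<mu> (1 / real n) \<noteq> 0"
    using n \<mu> by (intro less_imp_neq[symmetric] sin_mu_pos) (auto simp: mult.commute)
  assume "sf_eigenvalue n \<sigma> \<mu>"
  then obtain v where ep: "sf_eigenpair n \<sigma> \<mu> v" by (auto simp: sf_eigenvalue_def)
  obtain j where pos: "\<mu> > 0" and j: "j \<in> {1..n - 1}"
    and T: "2 * cos_mu \<mu> (1 / real n) + \<sigma> * sin_mu \<mu> (1 / real n) = 2 * cos (real j * pi / real n)"
    by (rule sf_eigenpair_nodes[OF ep n \<sigma> S])
  define g where "g = sqrt \<mu>"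
  have g: "0 < g" "g < real n * pi" "\<mu> = g\<^sup>2"
    using pos \<mu> n real_less_lsqrt by (auto simp: g_def)
  then have "dispersion_root n \<sigma> j = g"
    using T trace_eq_dispersion[of g n \<sigma>] by (intro dispersion_root_unique[OF n \<sigma> j]) simp_all
  with g(3) j show "\<exists>j\<in>{1..n - 1}. \<mu> = (dispersion_root n \<sigma> j)\<^sup>2" by blast
next
  assume "\<exists>j\<in>{1..n - 1}. \<mu> = (dispersion_root n \<sigma> j)\<^sup>2"
  then obtain j where j: "j \<in> {1..n - 1}" and \<mu>j: "\<mu> = (dispersion_root n \<sigma> j)\<^sup>2" by blast
  note g = dispersion_root[OF n \<sigma> j]
  show "sf_eigenvalue n \<sigma> \<mu>"
  proof (rule sf_eigenvalue_of_trace[OF n])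
    show "sin_mu \<mu> (1 / real n) \<noteq> 0"
      using n \<mu> by (intro less_imp_neq[symmetric] sin_mu_pos) (auto simp: mult.commute)
    show "2 * cos_mu \<mu> (1 / real n) + \<sigma> * sin_mu \<mu> (1 / real n) = 2 * cos (real j * pi / real n)"
      using trace_eq_dispersion[OF g(1)] g(3) by (simp add: \<mu>j)
    show "sin (real j * pi / real n) \<noteq> 0"
      using j n by (intro less_imp_neq[symmetric] sin_gt_zero) (auto simp: field_simps)
    show "sin (real n * (real j * pi / real n)) = 0"
      using n by (simp add: sin_zero_iff_int2)
  qed
qed

lemma sf_eigenvalues_below_dispersion_root:
  assumes n: "n \<ge> 1" and \<sigma>: "\<sigma> \<ge> 0" and j: "j \<in> {1..n - 1}"
  shows "{\<mu>. sf_eigenvalue n \<sigma> \<mu> \<and> \<mu> < (dispersion_root n \<sigma> j)\<^sup>2} =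
    (\<lambda>i. (dispersion_root n \<sigma> i)\<^sup>2) ` {1..<j}"
proof -
  have root_less: "dispersion_root n \<sigma> i < dispersion_root n \<sigma> j \<longleftrightarrow> i < j" if "i \<in> {1..n - 1}" for i
    by (rule strict_mono_on_less[OF strict_mono_on_dispersion_root[OF n \<sigma>] that j])
  have sq_less: "(dispersion_root n \<sigma> i)\<^sup>2 < (dispersion_root n \<sigma> j)\<^sup>2 \<longleftrightarrow> i < j"
    if "i \<in> {1..n - 1}" for i
    using dispersion_root(1)[OF n \<sigma>] that j root_less[OF that] less_imp_le
    by (meson power_less_imp_less_base power_strict_mono zero_less_numeral)
  have below: "(dispersion_root n \<sigma> j)\<^sup>2 < (real n * pi)\<^sup>2"
    using dispersion_root(1,2)[OF n \<sigma> j] by (intro power_strict_mono) auto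
  show ?thesis
  proof (intro equalityI subsetI)
    fix \<mu> assume "\<mu> \<in> {\<mu>. sf_eigenvalue n \<sigma> \<mu> \<and> \<mu> < (dispersion_root n \<sigma> j)\<^sup>2}"
    then have ev: "sf_eigenvalue n \<sigma> \<mu>" and less: "\<mu> < (dispersion_root n \<sigma> j)\<^sup>2" by auto
    with below obtain i where i: "i \<in> {1..n - 1}" "\<mu> = (dispersion_root n \<sigma> i)\<^sup>2"
      using sf_eigenvalue_below_iff[OF n \<sigma>, of \<mu>] by auto
    with less sq_less have "i < j" by blast
    with i show "\<mu> \<in> (\<lambda>i. (dispersion_root n \<sigma> i)\<^sup>2) ` {1..<j}" by auto
  next
    fix \<mu> assume "\<mu> \<in> (\<lambda>i. (dispersion_root n \<sigma> i)\<^sup>2) ` {1..<j}"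
    then obtain i where i: "i \<in> {1..n - 1}" "i < j" "\<mu> = (dispersion_root n \<sigma> i)\<^sup>2" using j by auto
    with below sf_eigenvalue_below_iff[OF n \<sigma>, of \<mu>] sq_less[OF i(1)]
    show "\<mu> \<in> {\<mu>. sf_eigenvalue n \<sigma> \<mu> \<and> \<mu> < (dispersion_root n \<sigma> j)\<^sup>2}" by auto
  qed
qed

lemma inj_on_dispersion_root_square:
  assumes "n \<ge> 1" "\<sigma> \<ge> 0"
  shows "inj_on (\<lambda>i. (dispersion_root n \<sigma> i)\<^sup>2) {1..n - 1}"
proof (rule inj_onI)
  fix i j assume i: "i \<in> {1..n - 1}" and j: "j \<in> {1..n - 1}"
    and "(dispersion_root n \<sigma> i)\<^sup>2 = (dispersion_root n \<sigma> j)\<^sup>2"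
  then have "dispersion_root n \<sigma> i = dispersion_root n \<sigma> j"
    using dispersion_root(1)[OF assms i] dispersion_root(1)[OF assms j] by (simp add: power2_eq_iff_nonneg)
  then show "i = j"
    by (rule inj_onD[OF strict_mono_on_imp_inj_on[OF strict_mono_on_dispersion_root[OF assms]] _ i j])
qed

lemma sf_mth_eigenvalue_eq_dispersion_root:
  assumes n: "n \<ge> 1" and \<sigma>: "\<sigma> \<ge> 0" and m: "m \<in> {1..n - 1}"
    and lam: "sf_mth_eigenvalue n \<sigma> m lam"
  shows "lam = (dispersion_root n \<sigma> m)\<^sup>2"
proof -
  define B where "B = {\<mu>. sf_eigenvalue n \<sigma> \<mu> \<and> \<mu> < lam}"
  define r where "r i = (dispersion_root n \<sigma> i)\<^sup>2" for i
  have B: "sf_eigenvalue n \<sigma> lam" "finite B" "card B = m - 1"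
    using lam by (simp_all add: sf_mth_eigenvalue_def B_def)
  have inj: "inj_on r A" if "A \<subseteq> {1..n - 1}" for A
    unfolding r_def by (rule inj_on_subset[OF inj_on_dispersion_root_square[OF n \<sigma>] that])
  have "lam < (real n * pi)\<^sup>2"
  proof (rule ccontr)
    assume "\<not> lam < (real n * pi)\<^sup>2"
    have "r ` {1..n - 1} \<subseteq> B"
    proof
      fix \<mu> assume "\<mu> \<in> r ` {1..n - 1}"
      then obtain i where i: "i \<in> {1..n - 1}" "\<mu> = r i" by blast
      then have "\<mu> < (real n * pi)\<^sup>2"
        using dispersion_root(1,2)[OF n \<sigma> i(1)] by (simp add: r_def power_strict_mono)
      with i \<open>\<not> lam < _\<close> show "\<mu> \<in> B"
        using sf_eigenvalue_below_iff[OF n \<sigma>, of \<mu>] by (auto simp: B_def r_def)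
    qed
    from card_mono[OF B(2) this] have "n - 1 \<le> m - 1"
      using card_image[OF inj[OF order_refl]] B(3) by simp
    with m show False by auto
  qed
  with B(1) obtain j where j: "j \<in> {1..n - 1}" "lam = r j"
    using sf_eigenvalue_below_iff[OF n \<sigma>] by (auto simp: r_def)
  then have "B = r ` {1..<j}"
    using sf_eigenvalues_below_dispersion_root[OF n \<sigma> j(1)] by (simp add: B_def r_def)
  moreover have "{1..<j} \<subseteq> {1..n - 1}" using j(1) by auto
  ultimately have "card B = j - 1" using card_image[OF inj] by simp
  with B(3) j(1) m have "j = m" by auto
  with j show ?thesis by (simp add: r_def)
qed

lemma sf_mth_eigenpair_nodes:
  assumes n: "n \<ge> 1" and \<sigma>: "\<sigma> \<ge> 0" and m: "m \<in> {1..n - 1}"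
    and lam: "sf_mth_eigenvalue n \<sigma> m lam" and ep: "sf_eigenpair n \<sigma> lam u" and k: "k \<le> n"
  shows "u (grid n k) = u (grid n 1) * sin (real k * real m * pi / real n) / sin (real m * pi / real n)"
proof -
  note root = dispersion_root[OF n \<sigma> m]
  have lam_eq: "lam = (dispersion_root n \<sigma> m)\<^sup>2"
    by (rule sf_mth_eigenvalue_eq_dispersion_root[OF n \<sigma> m lam])
  have "lam < (pi / (1 / real n))\<^sup>2"
    using root by (simp add: lam_eq power_strict_mono mult.commute)
  with n have S: "sin_mu lam (1 / real n) \<noteq> 0" by (intro less_imp_neq[symmetric] sin_mu_pos) auto
  obtain j where j: "j \<in> {1..n - 1}"
    and T: "2 * cos_mu lam (1 / real n) + \<sigma> * sin_mu lam (1 / real n) = 2 * cos (real j * pi / real n)"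
    and nodes: "\<And>k. k \<le> n \<Longrightarrow>
      u (grid n k) = u (grid n 1) * sin (real k * real j * pi / real n) / sin (real j * pi / real n)"
    using sf_eigenpair_nodes[OF ep n \<sigma> S] by blast
  have "dispersion_root n \<sigma> j = dispersion_root n \<sigma> m"
    using T trace_eq_dispersion[OF root(1), of n \<sigma>] root
    by (intro dispersion_root_unique[OF n \<sigma> j]) (simp_all add: lam_eq)
  then have "j = m"
    by (rule inj_onD[OF strict_mono_on_imp_inj_on[OF strict_mono_on_dispersion_root[OF n \<sigma>]] _ j m])
  with nodes[OF k] show ?thesis by simp
qed

theorem corollary1p2:
  fixes n m :: nat and \<sigma> lam :: real and u :: "real \<Rightarrow> real"
  assumes "n \<ge> 2" and "1 \<le> m" and "m \<le> n - 1" and "\<sigma> \<ge> 0"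
    and "sf_mth_eigenvalue n \<sigma> m lam"
    and "sf_eigenpair n \<sigma> lam u"
    and "\<forall>x\<in>{grid n 0..grid n 1}. u x = sin (sqrt lam * x)"
  shows "\<forall>k\<in>{1..n - 1}.
     u (grid n k) = sin (sqrt lam / real n) / sin (real m * pi / real n) * sin (real k * real m * pi / real n)
   \<and> sin (sqrt lam / real n) / sin (real m * pi / real n) * sin (real k * real m * pi / real n)
     = sin (sqrt lam / real n) / sin (real m * pi / real n) * sin (real m * pi * grid n k)"
proof -
  have n: "n \<ge> 1" and m: "m \<in> {1..n - 1}" using assms(1-3) by auto
  have u1: "u (grid n 1) = sin (sqrt lam / real n)"
    using assms(7) grid_nonneg[of n 1] by (simp add: grid_def)
  have "u (grid n k) = sin (sqrt lam / real n) * sin (real k * real m * pi / real n) / sin (real m * pi / real n)"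
    if "k \<le> n" for k
    using sf_mth_eigenpair_nodes[OF n assms(4) m assms(5,6) that] u1 by simp
  then show ?thesis by (auto simp: grid_def mult_ac)
qed

end
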